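(* Let $\mathcal{F}=\{B_1,\dots,B_t\}$ be a $(G,[k_1,\dots,k_t],\lambda)$ Hadamard partitioned difference family, assume $G$ has a subgroup $H$ of index $2$, and set $s_i=|B_i\cap H|$ for $i=1,\dots,t$. Then $$s_1+\cdots+s_t=\lambda\qquad\text{and}\qquad 2s_1(k_1-s_1)+\cdots+2s_t(k_t-s_t)=\lambda^2.$$
   Context: $G$ is a finite group written additively, with difference $x-y:=x+(-y)$. For $B\subseteq G$, $\Delta B$ is the multiset $\{x-y: x,y\in B, x\neq y\}$; for $\mathcal{F}=\{B_1,\dots,B_t\}$, $\Delta\mathcal{F}$ is the multiset union of the $\Delta B_i$. $\mathcal{F}$ is a $(G,[k_1,\dots,k_t],\lambda)$ partitioned difference family if the $B_i$ partition $G$, $|B_i|=k_i$, and $\Delta\mathcal{F}$ contains every non-zero element of $G$ exactly $\lambda$ times; it is Hadamard if $|G|=2\lambda$. *)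

theory Defs
  imports Main
begin

text \<open>A finite group written additively is modelled as a type of class group_add
(not necessarily commutative) with finite universe. A family B_0,...,B_(t-1)
is indexed by i < t.\<close>

text \<open>Multiplicity of d in the multiset Delta B = {x - y : x,y in B, x ~= y}.\<close>
definition diff_mult :: "'g::group_add set \<Rightarrow> 'g \<Rightarrow> nat" where
  "diff_mult B d = card {(x, y). x \<in> B \<and> y \<in> B \<and> x \<noteq> y \<and> x - y = d}"

definition is_PDF :: "nat \<Rightarrow> (nat \<Rightarrow> 'g::{group_add,finite} set) \<Rightarrow> (nat \<Rightarrow> nat) \<Rightarrow> nat \<Rightarrow> bool" where
  "is_PDF t B k lam \<longleftrightarrow>
     (\<forall>i<t. B i \<noteq> {}) \<and>
     (\<forall>i<t. \<forall>j<t. i \<noteq> j \<longrightarrow> B i \<inter> B j = {}) \<and>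
     (\<Union>i<t. B i) = UNIV \<and>
     (\<forall>i<t. card (B i) = k i) \<and>
     (\<forall>d. d \<noteq> 0 \<longrightarrow> (\<Sum>i<t. diff_mult (B i) d) = lam)"

definition is_Hadamard_PDF :: "nat \<Rightarrow> (nat \<Rightarrow> 'g::{group_add,finite} set) \<Rightarrow> (nat \<Rightarrow> nat) \<Rightarrow> nat \<Rightarrow> bool" where
  "is_Hadamard_PDF t B k lam \<longleftrightarrow> is_PDF t B k lam \<and> card (UNIV :: 'g set) = 2 * lam"

definition add_subgroup :: "'g::group_add set \<Rightarrow> bool" where
  "add_subgroup H \<longleftrightarrow> 0 \<in> H \<and> (\<forall>x\<in>H. \<forall>y\<in>H. x + y \<in> H) \<and> (\<forall>x\<in>H. - x \<in> H)"

definition index_two_subgroup :: "'g::{group_add,finite} set \<Rightarrow> bool" where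
  "index_two_subgroup H \<longleftrightarrow> add_subgroup H \<and> card (UNIV :: 'g set) = 2 * card H"

end

theory Submission
  imports Defs
begin

text \<open>The complement of an index-two subgroup H is a single coset, so a difference x - y
lies outside H exactly when one of x, y lies in H and the other does not. Hence the
differences of a block S that fall outside H are counted by 2 |S \<inter> H| |S - H|. Summing
over the blocks and exchanging the order of summation, each of the |G| - |H| = \<lambda>
elements outside H is covered \<lambda> times, which gives \<lambda>^2; and since the blocks
partition G, their intersections with H partition H, whose size is \<lambda>.\<close>

lemma add_subgroup_add:
  "add_subgroup H \<Longrightarrow> x \<in> H \<Longrightarrow> y \<in> H \<Longrightarrow> x + y \<in> H"
  and add_subgroup_uminus:
  "add_subgroup H \<Longrightarrow> x \<in> H \<Longrightarrow> - x \<in> H"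
  unfolding add_subgroup_def by blast+

lemma add_subgroup_diff_mem_iff_left:
  assumes "add_subgroup H" "x \<in> H"
  shows "x - y \<in> H \<longleftrightarrow> y \<in> H"
proof
  assume "x - y \<in> H"
  then have "- (x - y) + x \<in> H"
    using assms by (intro add_subgroup_add add_subgroup_uminus)
  then show "y \<in> H" by (simp add: minus_diff_eq)
next
  assume "y \<in> H"
  then show "x - y \<in> H"
    unfolding diff_conv_add_uminus using assms by (intro add_subgroup_add add_subgroup_uminus)
qed

lemma add_subgroup_diff_mem_iff_right:
  assumes "add_subgroup H" "y \<in> H"
  shows "x - y \<in> H \<longleftrightarrow> x \<in> H"
proof
  assume "x - y \<in> H"
  then have "(x - y) + y \<in> H" using assms by (intro add_subgroup_add)
  then show "x \<in> H" by simp
next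
  assume "x \<in> H"
  then show "x - y \<in> H" using assms add_subgroup_diff_mem_iff_left by blast
qed

lemma index_two_subgroup_coset_eq_compl:
  fixes H :: "'g::{group_add,finite} set"
  assumes "index_two_subgroup H" "x \<notin> H"
  shows "(\<lambda>h. h + x) ` H = - H"
proof (rule card_subset_eq)
  have sg: "add_subgroup H" and card_UNIV: "card (UNIV :: 'g set) = 2 * card H"
    using assms(1) unfolding index_two_subgroup_def by auto
  show "(\<lambda>h. h + x) ` H \<subseteq> - H"
    using sg assms(2) add_subgroup_diff_mem_iff_left by fastforce
  have "card ((\<lambda>h. h + x) ` H) = card H"
    by (rule card_image) (simp add: inj_on_def)
  also have "\<dots> = card (- H)"
    using card_UNIV by (simp add: Compl_eq_Diff_UNIV card_Diff_subset)
  finally show "card ((\<lambda>h. h + x) ` H) = card (- H)" .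
qed simp

lemma index_two_subgroup_diff_mem_iff:
  fixes H :: "'g::{group_add,finite} set"
  assumes "index_two_subgroup H"
  shows "x - y \<in> H \<longleftrightarrow> (x \<in> H \<longleftrightarrow> y \<in> H)"
proof -
  have sg: "add_subgroup H" using assms unfolding index_two_subgroup_def by simp
  show ?thesis
  proof (cases "x \<in> H")
    case True
    then show ?thesis using sg add_subgroup_diff_mem_iff_left by simp
  next
    case x_notin: False
    show ?thesis
    proof (cases "y \<in> H")
      case True
      then show ?thesis using sg add_subgroup_diff_mem_iff_right by simp
    next
      case False
      then obtain h where "h \<in> H" "y = h + x"
        using index_two_subgroup_coset_eq_compl[OF assms x_notin] by blast
      moreover have "x - (h + x) = - h"
        by (simp only: diff_conv_add_uminus minus_add add_minus_cancel)
      ultimately have "x - y \<in> H"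
        using sg by (simp add: add_subgroup_uminus)
      with x_notin False show ?thesis by simp
    qed
  qed
qed

lemma sum_diff_mult:
  fixes S D :: "'g::{group_add,finite} set"
  shows "(\<Sum>d\<in>D. diff_mult S d) = card {(x, y). x \<in> S \<and> y \<in> S \<and> x \<noteq> y \<and> x - y \<in> D}"
    (is "_ = card ?P")
proof -
  have "(\<Sum>d\<in>D. diff_mult S d) = (\<Sum>d\<in>D. card {p \<in> ?P. case_prod (-) p = d})"
    unfolding diff_mult_def by (intro sum.cong refl arg_cong[where f = card]) auto
  also have "\<dots> = (\<Sum>d\<in>D. \<Sum>p\<in>{p \<in> ?P. case_prod (-) p = d}. 1)"
    by simp
  also have "\<dots> = (\<Sum>p\<in>?P. 1)"
    by (rule sum.group) auto
  also have "\<dots> = card ?P" by simp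
  finally show ?thesis .
qed

lemma sum_diff_mult_compl_index_two_subgroup:
  fixes S H :: "'g::{group_add,finite} set"
  assumes "index_two_subgroup H"
  shows "(\<Sum>d\<in>-H. diff_mult S d) = 2 * card (S \<inter> H) * (card S - card (S \<inter> H))"
proof -
  have "{(x, y). x \<in> S \<and> y \<in> S \<and> x \<noteq> y \<and> x - y \<in> - H}
      = (S \<inter> H) \<times> (S - H) \<union> (S - H) \<times> (S \<inter> H)"
    using index_two_subgroup_diff_mem_iff[OF assms] by auto
  moreover have "card ((S \<inter> H) \<times> (S - H) \<union> (S - H) \<times> (S \<inter> H))
      = card ((S \<inter> H) \<times> (S - H)) + card ((S - H) \<times> (S \<inter> H))"
    by (rule card_Un_disjoint) auto
  ultimately have "(\<Sum>d\<in>-H. diff_mult S d)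
      = card ((S \<inter> H) \<times> (S - H)) + card ((S - H) \<times> (S \<inter> H))"
    by (simp add: sum_diff_mult)
  then show ?thesis
    by (simp add: card_cartesian_product card_Diff_subset_Int Int_commute)
qed

lemma is_PDF_sum_card_Int:
  assumes "is_PDF t B k lam"
  shows "(\<Sum>i<t. card (B i \<inter> A)) = card A"
proof -
  have "(\<Sum>i<t. card (B i \<inter> A)) = card (\<Union>i<t. B i \<inter> A)"
    using assms unfolding is_PDF_def by (intro card_UN_disjoint[symmetric]) auto
  also have "(\<Union>i<t. B i \<inter> A) = A"
    using assms unfolding is_PDF_def by auto
  finally show ?thesis .
qed

lemma is_PDF_sum_diff_mult:
  assumes "is_PDF t B k lam" "0 \<notin> D"
  shows "(\<Sum>i<t. \<Sum>d\<in>D. diff_mult (B i) d) = lam * card D"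
proof -
  have lam_mult: "(\<Sum>i<t. diff_mult (B i) d) = lam" if "d \<noteq> 0" for d
    using assms(1) that unfolding is_PDF_def by blast
  have "(\<Sum>i<t. \<Sum>d\<in>D. diff_mult (B i) d) = (\<Sum>d\<in>D. \<Sum>i<t. diff_mult (B i) d)"
    by (rule sum.swap)
  also have "\<dots> = (\<Sum>d\<in>D. lam)"
    using assms(2) by (intro sum.cong refl lam_mult) blast
  finally show ?thesis by simp
qed

theorem proposition5p1:
  fixes t :: nat and B :: "nat \<Rightarrow> 'g::{group_add,finite} set"
    and k :: "nat \<Rightarrow> nat" and lam :: nat and H :: "'g set"
  assumes "is_Hadamard_PDF t B k lam"
    and "index_two_subgroup H"
  shows "(\<Sum>i<t. card (B i \<inter> H)) = lam
       \<and> (\<Sum>i<t. 2 * card (B i \<inter> H) * (k i - card (B i \<inter> H))) = lam^2"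
proof -
  have pdf: "is_PDF t B k lam" and card_UNIV: "card (UNIV :: 'g set) = 2 * lam"
    using assms(1) unfolding is_Hadamard_PDF_def by auto
  have card_H: "card H = lam" and card_compl: "card (- H) = lam" and "0 \<notin> - H"
    using assms(2) card_UNIV
    unfolding index_two_subgroup_def add_subgroup_def
    by (auto simp: Compl_eq_Diff_UNIV card_Diff_subset)
  have "(\<Sum>i<t. 2 * card (B i \<inter> H) * (k i - card (B i \<inter> H)))
      = (\<Sum>i<t. \<Sum>d\<in>-H. diff_mult (B i) d)"
    using pdf sum_diff_mult_compl_index_two_subgroup[OF assms(2)]
    unfolding is_PDF_def by (intro sum.cong) auto
  also have "\<dots> = lam^2"
    using is_PDF_sum_diff_mult[OF pdf \<open>0 \<notin> - H\<close>] card_compl by (simp add: power2_eq_square)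
  finally show ?thesis
    using is_PDF_sum_card_Int[OF pdf, of H] card_H by simp
qed

end
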